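(* Let $(A,\to,1)$ be an algebra of type $(2,0)$ satisfying (Re), (M), (B) and (An). Then $(A,\to,1)$ satisfies (Ex) if and only if it satisfies (BB).
   Context: Properties, required for all $x,y,z\in A$: (Re) $x\to x=1$; (M) $1\to x=x$; (B) $(y\to z)\to((x\to y)\to(x\to z))=1$; (An) $x\to y=1$ and $y\to x=1$ imply $x=y$; (Ex) $x\to(y\to z)=y\to(x\to z)$; (BB) $(y\to z)\to((z\to x)\to(y\to x))=1$. *)

theory Defs
  imports Main
begin

text \<open>An algebra (A, imp, one) of type (2,0); the carrier A is the whole type 'a.\<close>

definition prop_Re :: "('a \<Rightarrow> 'a \<Rightarrow> 'a) \<Rightarrow> 'a \<Rightarrow> bool" where
  "prop_Re imp one \<longleftrightarrow> (\<forall>x. imp x x = one)"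

definition prop_M :: "('a \<Rightarrow> 'a \<Rightarrow> 'a) \<Rightarrow> 'a \<Rightarrow> bool" where
  "prop_M imp one \<longleftrightarrow> (\<forall>x. imp one x = x)"

definition prop_B :: "('a \<Rightarrow> 'a \<Rightarrow> 'a) \<Rightarrow> 'a \<Rightarrow> bool" where
  "prop_B imp one \<longleftrightarrow> (\<forall>x y z. imp (imp y z) (imp (imp x y) (imp x z)) = one)"

definition prop_An :: "('a \<Rightarrow> 'a \<Rightarrow> 'a) \<Rightarrow> 'a \<Rightarrow> bool" where
  "prop_An imp one \<longleftrightarrow> (\<forall>x y. imp x y = one \<and> imp y x = one \<longrightarrow> x = y)"

definition prop_Ex :: "('a \<Rightarrow> 'a \<Rightarrow> 'a) \<Rightarrow> bool" where
  "prop_Ex imp \<longleftrightarrow> (\<forall>x y z. imp x (imp y z) = imp y (imp x z))"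

definition prop_BB :: "('a \<Rightarrow> 'a \<Rightarrow> 'a) \<Rightarrow> 'a \<Rightarrow> bool" where
  "prop_BB imp one \<longleftrightarrow> (\<forall>x y z. imp (imp y z) (imp (imp z x) (imp y x)) = one)"

end

theory Submission
  imports Defs
begin

text \<open>With (Ex), (BB) is just (B) with its two antecedents exchanged. Conversely, writing
  \<open>x \<le> y\<close> for \<open>x \<rightarrow> y = 1\<close>, (B) and (M) make \<open>\<le>\<close> transitive, (BB) and (M) make
  \<open>\<rightarrow>\<close> antitone in its first argument and give \<open>z \<le> (z \<rightarrow> x) \<rightarrow> x\<close>; chaining
  \<open>x \<rightarrow> (y \<rightarrow> z) \<le> ((y \<rightarrow> z) \<rightarrow> z) \<rightarrow> (x \<rightarrow> z) \<le> y \<rightarrow> (x \<rightarrow> z)\<close> and using (An)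
  on both instances yields (Ex).\<close>

lemma prop_BB_if_prop_Ex:
  assumes "prop_Ex imp" and "prop_B imp one"
  shows "prop_BB imp one"
  using assms unfolding prop_Ex_def prop_B_def prop_BB_def by metis

lemma imp_one_trans:
  assumes "prop_M imp one" and "prop_B imp one"
    and "imp a b = one" and "imp b c = one"
  shows "imp a c = one"
proof -
  have "imp (imp b c) (imp (imp a b) (imp a c)) = one"
    using assms(2) unfolding prop_B_def by blast
  then show ?thesis
    using assms(1,3,4) unfolding prop_M_def by simp
qed

lemma imp_one_antitone:
  assumes "prop_M imp one" and "prop_BB imp one" and "imp a b = one"
  shows "imp (imp b w) (imp a w) = one"
proof -
  have "imp (imp a b) (imp (imp b w) (imp a w)) = one"
    using assms(2) unfolding prop_BB_def by blast
  then show ?thesis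
    using assms(1,3) unfolding prop_M_def by simp
qed

lemma imp_one_modus_ponens:
  assumes "prop_M imp one" and "prop_BB imp one"
  shows "imp z (imp (imp z x) x) = one"
proof -
  have "imp (imp one z) (imp (imp z x) (imp one x)) = one"
    using assms(2) unfolding prop_BB_def by blast
  then show ?thesis
    using assms(1) unfolding prop_M_def by simp
qed

lemma imp_one_exchange:
  assumes M: "prop_M imp one" and B: "prop_B imp one" and BB: "prop_BB imp one"
  shows "imp (imp x (imp y z)) (imp y (imp x z)) = one"
proof -
  have "imp (imp x (imp y z)) (imp (imp (imp y z) z) (imp x z)) = one"
    using BB unfolding prop_BB_def by blast
  moreover have "imp (imp (imp (imp y z) z) (imp x z)) (imp y (imp x z)) = one"
    using imp_one_antitone[OF M BB imp_one_modus_ponens[OF M BB]] .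
  ultimately show ?thesis
    using imp_one_trans[OF M B] by blast
qed

lemma prop_Ex_if_prop_BB:
  assumes M: "prop_M imp one" and B: "prop_B imp one" and An: "prop_An imp one"
    and BB: "prop_BB imp one"
  shows "prop_Ex imp"
  using An imp_one_exchange[OF M B BB] unfolding prop_An_def prop_Ex_def by blast

theorem theorem2p4:
  fixes imp :: "'a \<Rightarrow> 'a \<Rightarrow> 'a" and one :: 'a
  assumes "prop_Re imp one" and "prop_M imp one" and "prop_B imp one" and "prop_An imp one"
  shows "prop_Ex imp \<longleftrightarrow> prop_BB imp one"
  using prop_BB_if_prop_Ex[OF _ assms(3)] prop_Ex_if_prop_BB[OF assms(2-4)] by blast

end
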